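(* For each $p$, let $n=n(p)$ with $n/p$ bounded, and let $r_1,\dots,r_n\in\mathbb{R}^p$ be independent random vectors (a triangular array), each with the same mean and the same covariance $\Sigma$, with $\|\Sigma\|_2\le\log p$ and $\operatorname{trace}(\Sigma)/p\le K$ for $K$ independent of $p$, and each satisfying one of the following concentration hypotheses (with $C$ independent of $p$ and $F$, $m_F$ a median): (a) for every convex $1$-Lipschitz $F$, $P(|F(r_i)-m_F|>t)\le C\exp(-c(p)t^2)$, $c(p)$ constant or $\asymp p^{-\alpha}$, $0\le\alpha<1$; (b) for every convex $1$-Lipschitz $F$, $P(|F(r_i)-m_F|>t)\le C\exp(-c(p)t^b)$ for fixed $b>0$, $c(p)$ constant or $\asymp p^{-\alpha}$, $0\le\alpha<b/2$; (c) $r_i=\Phi(u)$ with $\Phi$ $1$-Lipschitz and $P(|F(u)-m_F|>t)\le C\exp(-c(p)t^2)$ for every $1$-Lipschitz $F$, $c(p)$ as in (a). Then the spectral distribution of $A_n=\frac1n\sum_{i=1}^nr_ir_i^*$ is a.s. tight.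
   Context: The spectral distribution of a $p\times p$ Hermitian matrix puts mass $1/p$ at each eigenvalue. *)

theory Defs
  imports "HOL-Probability.Probability" "Jordan_Normal_Form.Char_Poly"
begin

text \<open>Vectors of R^p are represented as functions nat => real; only the
coordinates j < p matter.\<close>

definition edist :: "nat \<Rightarrow> (nat \<Rightarrow> real) \<Rightarrow> (nat \<Rightarrow> real) \<Rightarrow> real" where
  "edist p x y = sqrt (\<Sum>j<p. (x j - y j)^2)"

definition lip1 :: "nat \<Rightarrow> ((nat \<Rightarrow> real) \<Rightarrow> real) \<Rightarrow> bool" where
  "lip1 p F \<longleftrightarrow> (\<forall>x y. \<bar>F x - F y\<bar> \<le> edist p x y)"

definition convex_fun :: "((nat \<Rightarrow> real) \<Rightarrow> real) \<Rightarrow> bool" where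
  "convex_fun F \<longleftrightarrow> (\<forall>x y (t::real). 0 \<le> t \<and> t \<le> 1 \<longrightarrow>
      F (\<lambda>j. t * x j + (1 - t) * y j) \<le> t * F x + (1 - t) * F y)"

definition is_median :: "'a measure \<Rightarrow> ('a \<Rightarrow> real) \<Rightarrow> real \<Rightarrow> bool" where
  "is_median M X m \<longleftrightarrow> measure M {\<omega>\<in>space M. X \<omega> \<ge> m} \<ge> 1/2 \<and>
                        measure M {\<omega>\<in>space M. X \<omega> \<le> m} \<ge> 1/2"

definition concentr :: "'a measure \<Rightarrow> (((nat \<Rightarrow> real) \<Rightarrow> real) \<Rightarrow> bool) \<Rightarrow> ('a \<Rightarrow> nat \<Rightarrow> real)
     \<Rightarrow> real \<Rightarrow> real \<Rightarrow> real \<Rightarrow> bool" where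
  "concentr M Fs X C c b \<longleftrightarrow> (\<forall>F. Fs F \<longrightarrow> (\<exists>m. is_median M (\<lambda>\<omega>. F (X \<omega>)) m \<and>
      (\<forall>t>0. measure M {\<omega>\<in>space M. \<bar>F (X \<omega>) - m\<bar> > t} \<le> C * exp (- c * t powr b))))"

definition hypA :: "'a measure \<Rightarrow> nat \<Rightarrow> ('a \<Rightarrow> nat \<Rightarrow> real) \<Rightarrow> real \<Rightarrow> real \<Rightarrow> bool" where
  "hypA M p X C c \<longleftrightarrow> concentr M (\<lambda>F. convex_fun F \<and> lip1 p F) X C c 2"

definition hypB :: "'a measure \<Rightarrow> nat \<Rightarrow> ('a \<Rightarrow> nat \<Rightarrow> real) \<Rightarrow> real \<Rightarrow> real \<Rightarrow> real \<Rightarrow> bool" where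
  "hypB M p X C c b \<longleftrightarrow> concentr M (\<lambda>F. convex_fun F \<and> lip1 p F) X C c b"

definition hypC :: "'a measure \<Rightarrow> nat \<Rightarrow> ('a \<Rightarrow> nat \<Rightarrow> real) \<Rightarrow> real \<Rightarrow> real \<Rightarrow> bool" where
  "hypC M p X C c \<longleftrightarrow> (\<exists>(d::nat) (u::'a \<Rightarrow> nat \<Rightarrow> real) (\<Phi>::(nat \<Rightarrow> real) \<Rightarrow> nat \<Rightarrow> real).
      (\<forall>j<d. (\<lambda>\<omega>. u \<omega> j) \<in> borel_measurable M) \<and>
      (\<forall>x y. edist p (\<Phi> x) (\<Phi> y) \<le> edist d x y) \<and>
      (\<forall>\<omega>\<in>space M. \<forall>j<p. X \<omega> j = \<Phi> (u \<omega>) j) \<and>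
      concentr M (lip1 d) u C c 2)"

definition op_norm2 :: "nat \<Rightarrow> (nat \<Rightarrow> nat \<Rightarrow> real) \<Rightarrow> real" where
  "op_norm2 p S = Sup {sqrt (\<Sum>j<p. (\<Sum>k<p. S j k * v k)^2) | v. (\<Sum>k<p. (v k)^2) \<le> 1}"

definition sample_mat :: "nat \<Rightarrow> nat \<Rightarrow> (nat \<Rightarrow> nat \<Rightarrow> real) \<Rightarrow> real mat" where
  "sample_mat p n r = mat p p (\<lambda>(j,k). (1 / real n) * (\<Sum>i<n. r i j * r i k))"

definition spectral_distribution :: "real mat \<Rightarrow> real measure" where
  "spectral_distribution A =
     distr (measure_pmf (pmf_of_multiset (proots (char_poly A)))) borel (\<lambda>x. x)"

end

theory Submission
  imports Defs "HOL-Real_Asymp.Real_Asymp"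
begin

text \<open>
  In an orthonormal eigenbasis of \<open>A\<^sub>n\<close> the diagonal matrix of eigenvalues is \<open>G + c c\<^sup>T\<close>, where
  \<open>G\<close> is the (positive semidefinite) Gram matrix of the rows centred at their sample mean and
  \<open>c\<close> holds the coordinates of the sample mean. Discarding the single direction \<open>c\<close> shows that
  at most \<open>1 + tr G / T\<close> eigenvalues exceed \<open>T\<close>, and \<open>tr G\<close> is at most the average of
  \<open>|r\<^sub>i - \<mu>|\<^sup>2\<close>. The true mean \<open>\<mu>\<close> may be huge, which is why it has to be split off this way.

  The map \<open>x \<mapsto> |x - \<mu>|\<close> is convex and 1-Lipschitz, so each of the hypotheses (a)-(c) makes
  \<open>|r\<^sub>i - \<mu>|\<close> concentrate around a median; by Markov's inequality that median is at most
  \<open>sqrt (2 tr \<Sigma>) \<le> sqrt (2 K p)\<close>, and the probability of deviating by \<open>sqrt p\<close> is at most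
  \<open>C exp (- c p\<^sup>\<gamma>)\<close> for some \<open>\<gamma> > 0\<close>. Since \<open>n = O(p)\<close>, these probabilities are summable over
  all rows of the triangular array, so by Borel-Cantelli almost surely \<open>|r\<^sub>i - \<mu>|\<^sup>2 \<le> L p\<close> for all
  rows once \<open>p\<close> is large. Then at most a fraction \<open>1/p + L/T\<close> of the eigenvalues exceeds \<open>T\<close>,
  uniformly in \<open>p\<close>, which is tightness.
\<close>

section \<open>Orthogonal diagonalization of real symmetric matrices\<close>

lemma scalar_prod_eq_sum:
  "v \<in> carrier_vec n \<Longrightarrow> w \<in> carrier_vec n \<Longrightarrow> v \<bullet> w = (\<Sum>i<n. v $ i * w $ i)"
  by (simp add: scalar_prod_def lessThan_atLeast0)

lemma index_mult_mat_eq_sum: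
  assumes "A \<in> carrier_mat n m" "B \<in> carrier_mat m q" "i < n" "j < q"
  shows "(A * B) $$ (i, j) = (\<Sum>l<m. A $$ (i, l) * B $$ (l, j))"
  using assms by (auto simp: scalar_prod_def lessThan_atLeast0 intro!: sum.cong)

lemma index_mult_mat_vec_eq_sum:
  assumes "A \<in> carrier_mat n m" "v \<in> carrier_vec m" "i < n"
  shows "(A *\<^sub>v v) $ i = (\<Sum>l<m. A $$ (i, l) * v $ l)"
  using assms by (auto simp: scalar_prod_def lessThan_atLeast0 intro!: sum.cong)

lemma mult_unit_vec_eq_col:
  fixes A :: "'a :: semiring_1 mat"
  assumes "A \<in> carrier_mat n n" "j < n"
  shows "A *\<^sub>v unit_vec n j = col A j"
  using col_mult2[OF assms(1) one_carrier_mat assms(2)] right_mult_one_mat[OF assms(1)] assms(2) by simp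

lemma scalar_prod_self_pos:
  fixes z :: "real vec"
  assumes "z \<in> carrier_vec m" "z \<noteq> 0\<^sub>v m"
  shows "0 < z \<bullet> z"
proof -
  obtain i where i: "i < m" "z $ i \<noteq> 0"
    using assms by (metis eq_vecI carrier_vecD index_zero_vec)
  have "(z $ i)^2 \<le> (\<Sum>j<m. (z $ j)^2)"
    by (rule member_le_sum) (use i in auto)
  with i show ?thesis
    using assms(1) by (simp add: scalar_prod_eq_sum power2_eq_square[symmetric])
      (smt (verit) zero_less_power2)
qed

lemma unit_eigenvector_of_eigenvector:
  fixes M :: "real mat"
  assumes M: "M \<in> carrier_mat m m" and w: "w \<in> carrier_vec m" "w \<noteq> 0\<^sub>v m" and Mw: "M *\<^sub>v w = l \<cdot>\<^sub>v w"
  shows "\<exists>u. u \<in> carrier_vec m \<and> u \<bullet> u = 1 \<and> M *\<^sub>v u = l \<cdot>\<^sub>v u"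
proof -
  define u where "u = (1 / sqrt (w \<bullet> w)) \<cdot>\<^sub>v w"
  have "u \<in> carrier_vec m" using w(1) by (simp add: u_def)
  moreover have "u \<bullet> u = 1"
    using scalar_prod_self_pos[OF w] w(1) by (simp add: u_def)
  moreover have "M *\<^sub>v u = l \<cdot>\<^sub>v u"
    using M w(1) Mw by (simp add: u_def mult_mat_vec smult_smult_assoc mult.commute)
  ultimately show ?thesis by blast
qed

lemma real_symmetric_eigenpair_Im_zero:
  fixes M :: "real mat" and x y :: "nat \<Rightarrow> real"
  assumes M: "M \<in> carrier_mat m m" and sym: "transpose_mat M = M"
    and Mx: "\<And>i. i < m \<Longrightarrow> (\<Sum>j<m. M $$ (i, j) * x j) = a * x i - b * y i"
    and My: "\<And>i. i < m \<Longrightarrow> (\<Sum>j<m. M $$ (i, j) * y j) = b * x i + a * y i"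
    and nz: "i0 < m" "x i0 \<noteq> 0 \<or> y i0 \<noteq> 0"
  shows "b = 0"
proof -
  have Msym: "M $$ (i, j) = M $$ (j, i)" if "i < m" "j < m" for i j
    using arg_cong[OF sym, of "\<lambda>A. A $$ (j, i)"] that M by simp
  have "(\<Sum>i<m. x i * (\<Sum>j<m. M $$ (i, j) * y j)) = (\<Sum>i<m. \<Sum>j<m. x i * M $$ (i, j) * y j)"
    by (simp add: sum_distrib_left mult.assoc)
  also have "\<dots> = (\<Sum>j<m. \<Sum>i<m. x i * M $$ (i, j) * y j)" by (rule sum.swap)
  also have "\<dots> = (\<Sum>j<m. y j * (\<Sum>i<m. M $$ (j, i) * x i))"
    by (simp add: sum_distrib_left Msym mult_ac)
  finally have "(\<Sum>i<m. x i * (b * x i + a * y i)) = (\<Sum>i<m. y i * (a * x i - b * y i))"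
    by (simp add: Mx My)
  hence "b * (\<Sum>i<m. (x i)^2 + (y i)^2) = 0"
    by (simp add: sum_distrib_left algebra_simps power2_eq_square sum.distrib sum_subtractf)
  moreover have "0 < (x i0)^2 + (y i0)^2"
    using nz by (auto simp: sum_power2_gt_zero_iff)
  moreover have "(x i0)^2 + (y i0)^2 \<le> (\<Sum>i<m. (x i)^2 + (y i)^2)"
    by (rule member_le_sum) (use nz in auto)
  ultimately show ?thesis by auto
qed

lemma real_symmetric_has_unit_eigenvector:
  fixes M :: "real mat"
  assumes M: "M \<in> carrier_mat m m" and m: "0 < m" and sym: "transpose_mat M = M"
  shows "\<exists>l u. u \<in> carrier_vec m \<and> u \<bullet> u = 1 \<and> M *\<^sub>v u = l \<cdot>\<^sub>v u"
proof -
  define Mc where "Mc = map_mat complex_of_real M"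
  have Mc: "Mc \<in> carrier_mat m m" using M by (simp add: Mc_def)
  obtain as where cp: "char_poly Mc = (\<Prod>a\<leftarrow>as. [:- a, 1:])" and len: "length as = m"
    using char_poly_factorized[OF Mc] by blast
  obtain a where "poly (char_poly Mc) a = 0"
    using len m unfolding cp by (cases as) auto
  then obtain v where "eigenvector Mc v a"
    using eigenvalue_root_char_poly[OF Mc] unfolding eigenvalue_def by blast
  hence v: "v \<in> carrier_vec m" "v \<noteq> 0\<^sub>v m" "Mc *\<^sub>v v = a \<cdot>\<^sub>v v"
    unfolding eigenvector_def using Mc by auto
  define x where "x i = Re (v $ i)" for i
  define y where "y i = Im (v $ i)" for i
  have eq: "(\<Sum>j<m. complex_of_real (M $$ (i, j)) * v $ j) = a * v $ i" if "i < m" for i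
    using arg_cong[OF v(3), of "\<lambda>w. w $ i"] that v(1) M
    by (simp add: Mc_def scalar_prod_def lessThan_atLeast0)
  have Mx: "(\<Sum>j<m. M $$ (i, j) * x j) = Re a * x i - Im a * y i" if "i < m" for i
    using arg_cong[OF eq[OF that], of Re] by (simp add: x_def y_def Re_sum)
  have My: "(\<Sum>j<m. M $$ (i, j) * y j) = Im a * x i + Re a * y i" if "i < m" for i
    using arg_cong[OF eq[OF that], of Im] by (simp add: x_def y_def Im_sum)
  obtain i0 where i0: "i0 < m" "v $ i0 \<noteq> 0"
    using v(1,2) by (metis eq_vecI carrier_vecD index_zero_vec)
  hence nz: "x i0 \<noteq> 0 \<or> y i0 \<noteq> 0" by (simp add: x_def y_def complex_eq_iff)
  have b: "Im a = 0" by (rule real_symmetric_eigenpair_Im_zero[OF M sym Mx My i0(1) nz])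
  obtain z where z: "\<And>i. i < m \<Longrightarrow> (\<Sum>j<m. M $$ (i, j) * z j) = Re a * z i" "z i0 \<noteq> 0"
    using Mx My nz b by (metis add_0 diff_zero mult_zero_left)
  define w where "w = vec m z"
  have w: "w \<in> carrier_vec m" "w \<noteq> 0\<^sub>v m"
    using z(2) i0(1) by (auto simp: w_def) (metis index_vec index_zero_vec(1))
  have "M *\<^sub>v w = Re a \<cdot>\<^sub>v w"
    by (rule eq_vecI) (use M z(1) in \<open>auto simp: w_def scalar_prod_def lessThan_atLeast0\<close>)
  thus ?thesis using unit_eigenvector_of_eigenvector[OF M w] by blast
qed

definition orth_mat :: "nat \<Rightarrow> real mat \<Rightarrow> bool" where
  "orth_mat n Q \<longleftrightarrow> Q \<in> carrier_mat n n \<and> transpose_mat Q * Q = 1\<^sub>m n"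

lemma orth_mat_mult_transpose: "orth_mat n Q \<Longrightarrow> Q * transpose_mat Q = 1\<^sub>m n"
  unfolding orth_mat_def by (intro mat_mult_left_right_inverse[of "transpose_mat Q" n]) auto

lemma orth_mat_mult:
  assumes "orth_mat n Q" "orth_mat n H"
  shows "orth_mat n (Q * H)"
proof -
  have Q: "Q \<in> carrier_mat n n" "transpose_mat Q * Q = 1\<^sub>m n"
    and H: "H \<in> carrier_mat n n" "transpose_mat H * H = 1\<^sub>m n"
    using assms by (auto simp: orth_mat_def)
  note assoc = assoc_mult_mat[of _ n n _ n _ n]
  have "transpose_mat (Q * H) * (Q * H) = transpose_mat H * (transpose_mat Q * Q) * H"
    using Q(1) H(1) by (simp add: transpose_mult assoc)
  also have "\<dots> = 1\<^sub>m n" using Q H by simp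
  finally show ?thesis using Q(1) H(1) by (simp add: orth_mat_def)
qed

definition reflection_mat :: "nat \<Rightarrow> real vec \<Rightarrow> real mat" where
  "reflection_mat n w = mat n n (\<lambda>(i, j). (if i = j then 1 else 0) - 2 / (w \<bullet> w) * (w $ i * w $ j))"

lemma reflection_mat_carrier: "reflection_mat n w \<in> carrier_mat n n"
  by (simp add: reflection_mat_def)

lemma transpose_reflection_mat: "transpose_mat (reflection_mat n w) = reflection_mat n w"
  by (rule eq_matI) (auto simp: reflection_mat_def mult.commute)

lemma reflection_mat_mult_vec:
  fixes w :: "real vec"
  assumes w: "w \<in> carrier_vec n" and v: "v \<in> carrier_vec n"
  shows "reflection_mat n w *\<^sub>v v = v - (2 * (w \<bullet> v) / (w \<bullet> w)) \<cdot>\<^sub>v w"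
proof (rule eq_vecI)
  fix i assume "i < dim_vec (v - (2 * (w \<bullet> v) / (w \<bullet> w)) \<cdot>\<^sub>v w)"
  hence i: "i < n" using w by simp
  have "(reflection_mat n w *\<^sub>v v) $ i
      = (\<Sum>j<n. (if i = j then v $ j else 0) - 2 / (w \<bullet> w) * w $ i * (w $ j * v $ j))"
    using i by (simp add: index_mult_mat_vec_eq_sum[OF reflection_mat_carrier v i])
      (auto simp: reflection_mat_def algebra_simps intro!: sum.cong)
  also have "\<dots> = (\<Sum>j<n. if i = j then v $ j else 0) - 2 / (w \<bullet> w) * w $ i * (\<Sum>j<n. w $ j * v $ j)"
    by (simp only: sum_subtractf sum_distrib_left)
  also have "\<dots> = (v - (2 * (w \<bullet> v) / (w \<bullet> w)) \<cdot>\<^sub>v w) $ i"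
    using i v w by (simp add: scalar_prod_eq_sum[OF w v])
  finally show "(reflection_mat n w *\<^sub>v v) $ i = (v - (2 * (w \<bullet> v) / (w \<bullet> w)) \<cdot>\<^sub>v w) $ i" .
qed (use v w in \<open>simp add: reflection_mat_def\<close>)

lemma reflection_mat_square:
  fixes w :: "real vec"
  assumes w: "w \<in> carrier_vec n" "w \<bullet> w \<noteq> 0"
  shows "reflection_mat n w * reflection_mat n w = 1\<^sub>m n"
proof -
  let ?R = "reflection_mat n w"
  have twice: "?R *\<^sub>v (?R *\<^sub>v v) = v" if v: "v \<in> carrier_vec n" for v
  proof -
    define t where "t = 2 * (w \<bullet> v) / (w \<bullet> w)"
    have Rv: "?R *\<^sub>v v = v - t \<cdot>\<^sub>v w"
      using reflection_mat_mult_vec[OF w(1) v] by (simp add: t_def)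
    have "w \<bullet> (v - t \<cdot>\<^sub>v w) = - (w \<bullet> v)"
      using v w by (simp add: scalar_prod_minus_distrib[OF w(1) v] t_def)
    hence "?R *\<^sub>v (?R *\<^sub>v v) = (v - t \<cdot>\<^sub>v w) - (- t) \<cdot>\<^sub>v w"
      using reflection_mat_mult_vec[OF w(1), of "v - t \<cdot>\<^sub>v w"] v w by (simp add: Rv t_def)
    then show ?thesis using v w by (auto intro!: eq_vecI)
  qed
  show ?thesis
  proof (rule eq_matI)
    fix i j assume "i < dim_row (1\<^sub>m n)" "j < dim_col (1\<^sub>m n)"
    hence ij: "i < n" "j < n" by auto
    have "(?R * ?R) $$ (i, j) = col (?R * ?R) j $ i"
      using ij reflection_mat_carrier[of n w] by simp
    also have "col (?R * ?R) j = ?R *\<^sub>v (?R *\<^sub>v unit_vec n j)"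
      using col_mult2[OF reflection_mat_carrier reflection_mat_carrier ij(2)] ij
      by (simp add: reflection_mat_carrier mult_unit_vec_eq_col)
    also have "\<dots> = unit_vec n j" by (rule twice) simp
    finally show "(?R * ?R) $$ (i, j) = 1\<^sub>m n $$ (i, j)"
      using ij by simp
  qed (auto simp: reflection_mat_def)
qed

lemma orthogonal_reflection_to_unit_vec:
  fixes u :: "real vec"
  assumes u: "u \<in> carrier_vec n" "u \<bullet> u = 1" and k: "k < n" and u0: "\<forall>j<k. u $ j = 0"
  shows "\<exists>H. orth_mat n H \<and> transpose_mat H = H \<and> H *\<^sub>v unit_vec n k = u \<and>
             (\<forall>j<k. H *\<^sub>v unit_vec n j = unit_vec n j)"
proof (cases "u = unit_vec n k")
  case True
  then show ?thesis by (intro exI[of _ "1\<^sub>m n"]) (use k in \<open>auto simp: orth_mat_def\<close>)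
next
  case False
  define w where "w = unit_vec n k - u"
  have w: "w \<in> carrier_vec n" using u by (simp add: w_def)
  have "w \<bullet> w = (\<Sum>i<n. w $ i * w $ i)" using w by (simp add: scalar_prod_eq_sum)
  also have "\<dots> = (\<Sum>i<n. (if i = k then 1 - 2 * u $ k else 0) + u $ i * u $ i)"
    using u(1) k by (auto simp: w_def algebra_simps unit_vec_def intro!: sum.cong)
  also have "\<dots> = 2 * (1 - u $ k)"
    using k u by (simp add: sum.distrib scalar_prod_eq_sum)
  finally have ww: "w \<bullet> w = 2 * (1 - u $ k)" .
  have ew: "unit_vec n k - w = u" using u(1) by (auto simp: w_def)
  hence "w \<noteq> 0\<^sub>v n" using False by auto
  hence ww0: "w \<bullet> w \<noteq> 0" using scalar_prod_self_pos[OF w] by simp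
  define H where "H = reflection_mat n w"
  have "transpose_mat H * H = 1\<^sub>m n"
    using reflection_mat_square[OF w ww0] by (simp add: H_def transpose_reflection_mat)
  hence "orth_mat n H" by (simp add: orth_mat_def H_def reflection_mat_carrier)
  moreover have "H *\<^sub>v unit_vec n k = u"
  proof -
    have "w $ k = 1 - u $ k" using k u by (simp add: w_def)
    hence "H *\<^sub>v unit_vec n k = unit_vec n k - w"
      using w k ww ww0 by (simp add: H_def reflection_mat_mult_vec)
    thus ?thesis using ew by simp
  qed
  moreover have "H *\<^sub>v unit_vec n j = unit_vec n j" if "j < k" for j
  proof -
    have "w $ j = 0" using that k u u0 by (simp add: w_def)
    thus ?thesis using w k that by (simp add: H_def reflection_mat_mult_vec) (intro eq_vecI, auto)
  qed
  ultimately show ?thesis by (auto simp: H_def transpose_reflection_mat)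
qed

definition diag_prefix :: "nat \<Rightarrow> 'a :: zero mat \<Rightarrow> bool" where
  "diag_prefix k B \<longleftrightarrow>
     (\<forall>i<dim_row B. \<forall>j<dim_col B. (i < k \<or> j < k) \<and> i \<noteq> j \<longrightarrow> B $$ (i, j) = 0)"

lemma diag_prefix_mult_unit_vec:
  fixes B :: "real mat"
  assumes B: "B \<in> carrier_mat n n" and "diag_prefix k B" and j: "j < k" "j < n"
  shows "B *\<^sub>v unit_vec n j = B $$ (j, j) \<cdot>\<^sub>v unit_vec n j"
  using assms by (intro eq_vecI) (auto simp: mult_unit_vec_eq_col diag_prefix_def)

lemma diag_prefix_if_unit_eigenvectors:
  fixes C :: "real mat"
  assumes C: "C \<in> carrier_mat n n" and sym: "transpose_mat C = C"
    and ev: "\<forall>j<k. \<exists>c. C *\<^sub>v unit_vec n j = c \<cdot>\<^sub>v unit_vec n j" and k: "k \<le> n"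
  shows "diag_prefix k C"
proof -
  have off: "C $$ (i, j) = 0" if ij: "i < n" "j < k" "i \<noteq> j" for i j
  proof -
    obtain c where "C *\<^sub>v unit_vec n j = c \<cdot>\<^sub>v unit_vec n j" using ev ij(2) by blast
    hence "col C j $ i = c * unit_vec n j $ i"
      using C ij k by (simp add: mult_unit_vec_eq_col)
    thus ?thesis using C ij k by simp
  qed
  have "C $$ (i, j) = C $$ (j, i)" if "i < n" "j < n" for i j
    using arg_cong[OF sym, of "\<lambda>A. A $$ (j, i)"] that C by simp
  with off C k show ?thesis unfolding diag_prefix_def by (metis carrier_matD order_less_le_trans)
qed

lemma sum_lessThan_drop_zero_prefix:
  fixes f :: "nat \<Rightarrow> 'b :: comm_monoid_add"
  assumes "k \<le> n" "\<And>j. j < k \<Longrightarrow> f j = 0"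
  shows "(\<Sum>j<n. f j) = (\<Sum>j<n - k. f (j + k))"
proof -
  have "(\<Sum>j<n. f j) = (\<Sum>j<k. f j) + (\<Sum>j\<in>{k..<n}. f j)"
    using assms(1) by (metis atLeast0LessThan sum.atLeastLessThan_concat zero_le)
  also have "{k..<n} = (\<lambda>j. j + k) ` {..<n - k}"
    using image_add_atLeastLessThan'[of k 0 "n - k"] assms(1) by (simp add: lessThan_atLeast0)
  finally show ?thesis
    using assms(2) by (simp add: sum.reindex inj_on_def)
qed

lemma diag_prefix_unit_eigenvector:
  fixes B :: "real mat"
  assumes B: "B \<in> carrier_mat n n" and sym: "transpose_mat B = B"
    and diag: "diag_prefix k B" and k: "k < n"
  shows "\<exists>l u. u \<in> carrier_vec n \<and> u \<bullet> u = 1 \<and> (\<forall>j<k. u $ j = 0) \<and> B *\<^sub>v u = l \<cdot>\<^sub>v u"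
proof -
  define S where "S = mat (n - k) (n - k) (\<lambda>(i, j). B $$ (i + k, j + k))"
  have S: "S \<in> carrier_mat (n - k) (n - k)" by (simp add: S_def)
  have "B $$ (i, j) = B $$ (j, i)" if "i < n" "j < n" for i j
    using arg_cong[OF sym, of "\<lambda>A. A $$ (j, i)"] that B by simp
  hence "transpose_mat S = S" by (intro eq_matI) (auto simp: S_def)
  then obtain l and y :: "real vec" where y: "y \<in> carrier_vec (n - k)" "y \<bullet> y = 1" "S *\<^sub>v y = l \<cdot>\<^sub>v y"
    using real_symmetric_has_unit_eigenvector[OF S] k by auto
  define u where "u = vec n (\<lambda>i. if i < k then 0 else y $ (i - k))"
  have u: "u \<in> carrier_vec n" by (simp add: u_def)
  have "u \<bullet> u = y \<bullet> y"
    using k u y(1) by (simp add: scalar_prod_eq_sum sum_lessThan_drop_zero_prefix[of k n] u_def)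
  moreover have "B *\<^sub>v u = l \<cdot>\<^sub>v u"
  proof (rule eq_vecI)
    fix i assume "i < dim_vec (l \<cdot>\<^sub>v u)"
    hence i: "i < n" by (simp add: u_def)
    have "(B *\<^sub>v u) $ i = (\<Sum>j<n. B $$ (i, j) * u $ j)"
      by (rule index_mult_mat_vec_eq_sum[OF B u i])
    also have "\<dots> = (\<Sum>j<n - k. B $$ (i, j + k) * y $ j)"
      using k by (simp add: sum_lessThan_drop_zero_prefix[of k] u_def)
    also have "\<dots> = (l \<cdot>\<^sub>v u) $ i"
    proof (cases "i < k")
      case True
      hence "\<And>j. j < n - k \<Longrightarrow> B $$ (i, j + k) = 0"
        using diag B i unfolding diag_prefix_def by auto
      thus ?thesis using True i by (simp add: u_def)
    next
      case False
      have "(\<Sum>j<n - k. B $$ (i, j + k) * y $ j) = (S *\<^sub>v y) $ (i - k)"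
        using False i by (subst index_mult_mat_vec_eq_sum[OF S y(1)]) (auto simp: S_def)
      thus ?thesis using y False i by (simp add: u_def)
    qed
    finally show "(B *\<^sub>v u) $ i = (l \<cdot>\<^sub>v u) $ i" .
  qed (use B in \<open>simp add: u_def\<close>)
  moreover have "\<forall>j<k. u $ j = 0" using k by (simp add: u_def)
  ultimately show ?thesis using u y(2) by (intro exI[of _ l] exI[of _ u]) simp
qed

lemma diag_prefix_step:
  fixes B :: "real mat"
  assumes B: "B \<in> carrier_mat n n" and sym: "transpose_mat B = B"
    and diag: "diag_prefix k B" and k: "k < n"
  shows "\<exists>H. orth_mat n H \<and> transpose_mat H = H \<and> diag_prefix (Suc k) (H * B * H)"
proof -
  obtain l and u :: "real vec" where u: "u \<in> carrier_vec n" "u \<bullet> u = 1" "\<forall>j<k. u $ j = 0" and Bu: "B *\<^sub>v u = l \<cdot>\<^sub>v u"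
    using diag_prefix_unit_eigenvector[OF B sym diag k] by blast
  obtain H where H: "orth_mat n H" "transpose_mat H = H" and Hk: "H *\<^sub>v unit_vec n k = u"
    and Hj: "\<forall>j<k. H *\<^sub>v unit_vec n j = unit_vec n j"
    using orthogonal_reflection_to_unit_vec[OF u(1,2) k u(3)] by blast
  have Hc: "H \<in> carrier_mat n n" and HH: "H * H = 1\<^sub>m n"
    using H by (auto simp: orth_mat_def)
  have "H *\<^sub>v u = (H * H) *\<^sub>v unit_vec n k"
    unfolding Hk[symmetric] using Hc k by (simp add: assoc_mult_mat_vec[of _ n n _ n])
  hence Hu: "H *\<^sub>v u = unit_vec n k" using HH k by simp
  note assoc = assoc_mult_mat[of _ n n _ n _ n] assoc_mult_mat_vec[of _ n n _ n]
  have "transpose_mat (H * B * H) = H * B * H"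
    using B Hc by (simp add: transpose_mult[of _ n n _ n] sym H(2) assoc)
  moreover have "\<exists>c. H * B * H *\<^sub>v unit_vec n j = c \<cdot>\<^sub>v unit_vec n j" if j: "j < Suc k" for j
  proof (cases "j < k")
    case True
    have "H * B * H *\<^sub>v unit_vec n j = H *\<^sub>v (B *\<^sub>v unit_vec n j)"
      using B Hc Hj True by (simp add: assoc)
    also have "\<dots> = B $$ (j, j) \<cdot>\<^sub>v unit_vec n j"
      using diag_prefix_mult_unit_vec[OF B diag True] True Hj Hc k by (simp add: mult_mat_vec)
    finally show ?thesis by blast
  next
    case False
    hence "j = k" using j by simp
    have "H * B * H *\<^sub>v unit_vec n k = l \<cdot>\<^sub>v unit_vec n k"
      using B Hc u(1) by (simp add: assoc Hk Bu mult_mat_vec Hu)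
    thus ?thesis using \<open>j = k\<close> by blast
  qed
  ultimately have "diag_prefix (Suc k) (H * B * H)"
    using B Hc k by (intro diag_prefix_if_unit_eigenvectors[of _ n]) auto
  with H show ?thesis by blast
qed

lemma real_symmetric_diag_prefix:
  fixes A :: "real mat"
  assumes A: "A \<in> carrier_mat n n" and sym: "transpose_mat A = A"
  shows "k \<le> n \<Longrightarrow> \<exists>Q. orth_mat n Q \<and> diag_prefix k (transpose_mat Q * A * Q)"
proof (induction k)
  case 0
  show ?case by (intro exI[of _ "1\<^sub>m n"]) (use A in \<open>auto simp: orth_mat_def diag_prefix_def\<close>)
next
  case (Suc k)
  then obtain Q where Q: "orth_mat n Q" and diag: "diag_prefix k (transpose_mat Q * A * Q)" by auto
  have Qc: "Q \<in> carrier_mat n n" using Q by (simp add: orth_mat_def)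
  note assoc = assoc_mult_mat[of _ n n _ n _ n] and tmult = transpose_mult[of _ n n _ n]
  define B where "B = transpose_mat Q * A * Q"
  have B: "B \<in> carrier_mat n n" using A Qc by (simp add: B_def)
  have "transpose_mat B = B"
    using A Qc by (simp add: B_def tmult sym assoc)
  moreover have "diag_prefix k B" using diag by (simp add: B_def)
  ultimately obtain H where H: "orth_mat n H" "transpose_mat H = H" "diag_prefix (Suc k) (H * B * H)"
    using diag_prefix_step[OF B _ _ Suc_le_lessD[OF Suc.prems]] by blast
  have Hc: "H \<in> carrier_mat n n" using H by (simp add: orth_mat_def)
  have "transpose_mat (Q * H) * A * (Q * H) = H * B * H"
    using A Qc Hc by (simp add: B_def tmult H(2) assoc)
  with H orth_mat_mult[OF Q H(1)] show ?case by metis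
qed

theorem real_symmetric_orthogonally_diagonalizable:
  fixes A :: "real mat"
  assumes "A \<in> carrier_mat n n" "transpose_mat A = A"
  shows "\<exists>Q. orth_mat n Q \<and> diagonal_mat (transpose_mat Q * A * Q)"
proof -
  obtain Q where Q: "orth_mat n Q" and diag: "diag_prefix n (transpose_mat Q * A * Q)"
    using real_symmetric_diag_prefix[OF assms order_refl] by blast
  have "transpose_mat Q * A * Q \<in> carrier_mat n n"
    using Q assms(1) by (auto simp: orth_mat_def)
  with diag have "diagonal_mat (transpose_mat Q * A * Q)"
    unfolding diag_prefix_def diagonal_mat_def by (metis carrier_matD)
  with Q show ?thesis by blast
qed

section \<open>Eigenvalues of the sample matrix\<close>

lemma proots_prod_linear_factors: "proots (\<Prod>a\<leftarrow>xs. [:- a, 1:]) = mset (xs :: real list)"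
proof (induction xs)
  case (Cons a xs)
  have "proots ([:- a, 1:] * (\<Prod>a\<leftarrow>xs. [:- a, 1:])) = proots [:- a, 1:] + proots (\<Prod>a\<leftarrow>xs. [:- a, 1:])"
    by (rule proots_mult) (auto simp: prod_list_zero_iff)
  then show ?case using Cons.IH proots_linear_factor[of "- a"] by simp
qed simp

lemma proots_char_poly_orthogonal_diagonal:
  fixes A :: "real mat"
  assumes A: "A \<in> carrier_mat p p" and Q: "orth_mat p Q" and diag: "diagonal_mat (transpose_mat Q * A * Q)"
  shows "proots (char_poly A) = mset (map (\<lambda>k. (transpose_mat Q * A * Q) $$ (k, k)) [0..<p])"
proof -
  define D where "D = transpose_mat Q * A * Q"
  have Qc: "Q \<in> carrier_mat p p" and D: "D \<in> carrier_mat p p"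
    using Q A by (auto simp: orth_mat_def D_def)
  note assoc = assoc_mult_mat[of _ p p _ p _ p]
  have "Q * D * transpose_mat Q = (Q * transpose_mat Q) * A * (Q * transpose_mat Q)"
    using A Qc by (simp add: D_def assoc)
  hence "A = Q * D * transpose_mat Q"
    using A orth_mat_mult_transpose[OF Q] by simp
  hence sim: "similar_mat A D"
    using A Qc D Q orth_mat_mult_transpose[OF Q]
    by (intro similar_matI[of A D Q "transpose_mat Q" p]) (auto simp: orth_mat_def)
  have "upper_triangular D"
    using diag D by (auto simp: D_def diagonal_mat_def upper_triangular_def)
  hence "char_poly A = (\<Prod>a\<leftarrow>map (\<lambda>k. D $$ (k, k)) [0..<p]. [:- a, 1:])"
    using char_poly_similar[OF sim] char_poly_upper_triangular[OF D] D
    by (simp add: diag_mat_def o_def)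
  thus ?thesis by (simp only: proots_prod_linear_factors D_def)
qed

lemma index_transpose_conj_mat:
  fixes Q A :: "real mat"
  assumes Q: "Q \<in> carrier_mat p p" and A: "A \<in> carrier_mat p p" and kl: "k < p" "l < p"
  shows "(transpose_mat Q * A * Q) $$ (k, l) = (\<Sum>a<p. \<Sum>b<p. Q $$ (a, k) * A $$ (a, b) * Q $$ (b, l))"
proof -
  have "(transpose_mat Q * A * Q) $$ (k, l) = (\<Sum>b<p. (transpose_mat Q * A) $$ (k, b) * Q $$ (b, l))"
    using Q A kl by (intro index_mult_mat_eq_sum[of _ p p]) auto
  also have "\<dots> = (\<Sum>b<p. (\<Sum>a<p. Q $$ (a, k) * A $$ (a, b)) * Q $$ (b, l))"
    using Q A kl by (intro sum.cong refl, subst index_mult_mat_eq_sum[of "transpose_mat Q" p p A p]) auto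
  also have "\<dots> = (\<Sum>b<p. \<Sum>a<p. Q $$ (a, k) * A $$ (a, b) * Q $$ (b, l))"
    by (simp add: sum_distrib_right)
  also have "\<dots> = (\<Sum>a<p. \<Sum>b<p. Q $$ (a, k) * A $$ (a, b) * Q $$ (b, l))"
    by (rule sum.swap)
  finally show ?thesis .
qed

definition dot_prod :: "nat \<Rightarrow> (nat \<Rightarrow> real) \<Rightarrow> (nat \<Rightarrow> real) \<Rightarrow> real" where
  "dot_prod p a b = (\<Sum>j<p. a j * b j)"

definition orthonormal_on :: "nat \<Rightarrow> 'k set \<Rightarrow> ('k \<Rightarrow> nat \<Rightarrow> real) \<Rightarrow> bool" where
  "orthonormal_on p S e \<longleftrightarrow> (\<forall>k\<in>S. \<forall>l\<in>S. dot_prod p (e k) (e l) = (if k = l then 1 else 0))"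

lemma sample_mat_bilinear:
  "(\<Sum>a<p. \<Sum>b<p. x a * sample_mat p n r $$ (a, b) * y b)
     = (1 / real n) * (\<Sum>i<n. dot_prod p x (r i) * dot_prod p y (r i))"
proof -
  have "(\<Sum>a<p. \<Sum>b<p. x a * sample_mat p n r $$ (a, b) * y b)
      = (\<Sum>a<p. \<Sum>b<p. \<Sum>i<n. (1 / real n) * ((x a * r i a) * (y b * r i b)))"
    by (intro sum.cong refl) (simp add: sample_mat_def sum_distrib_left sum_distrib_right mult_ac)
  also have "\<dots> = (\<Sum>a<p. \<Sum>i<n. \<Sum>b<p. (1 / real n) * ((x a * r i a) * (y b * r i b)))"
    by (intro sum.cong refl sum.swap)
  also have "\<dots> = (\<Sum>i<n. \<Sum>a<p. \<Sum>b<p. (1 / real n) * ((x a * r i a) * (y b * r i b)))"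
    by (rule sum.swap)
  also have "\<dots> = (\<Sum>i<n. (1 / real n) * ((\<Sum>a<p. x a * r i a) * (\<Sum>b<p. y b * r i b)))"
    by (simp only: sum_product) (simp only: sum_distrib_left)
  also have "\<dots> = (1 / real n) * (\<Sum>i<n. dot_prod p x (r i) * dot_prod p y (r i))"
    by (simp add: dot_prod_def sum_distrib_left)
  finally show ?thesis .
qed

lemma sample_mat_eigen_decomposition:
  "\<exists>d e. proots (char_poly (sample_mat p n r)) = mset (map d [0..<p]) \<and> orthonormal_on p {..<p} e \<and>
     (\<forall>k<p. \<forall>l<p. (1 / real n) * (\<Sum>i<n. dot_prod p (e k) (r i) * dot_prod p (e l) (r i))
                   = (if k = l then d k else 0))"
proof -
  define A where "A = sample_mat p n r"
  have A: "A \<in> carrier_mat p p" by (simp add: A_def sample_mat_def)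
  have "transpose_mat A = A"
    by (rule eq_matI) (auto simp: A_def sample_mat_def mult.commute)
  then obtain Q where Q: "orth_mat p Q" and diag: "diagonal_mat (transpose_mat Q * A * Q)"
    using real_symmetric_orthogonally_diagonalizable[OF A] by blast
  have Qc: "Q \<in> carrier_mat p p" and QTQ: "transpose_mat Q * Q = 1\<^sub>m p"
    using Q by (auto simp: orth_mat_def)
  define d where "d k = (transpose_mat Q * A * Q) $$ (k, k)" for k
  define e where "e k j = Q $$ (j, k)" for k j
  have "proots (char_poly A) = mset (map d [0..<p])"
    unfolding d_def by (rule proots_char_poly_orthogonal_diagonal[OF A Q diag])
  moreover have "orthonormal_on p {..<p} e"
  proof -
    have "dot_prod p (e k) (e l) = (transpose_mat Q * Q) $$ (k, l)" if "k < p" "l < p" for k l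
      using Qc that by (subst index_mult_mat_eq_sum[of _ p p _ p]) (auto simp: dot_prod_def e_def)
    thus ?thesis using QTQ by (simp add: orthonormal_on_def)
  qed
  moreover have "(1 / real n) * (\<Sum>i<n. dot_prod p (e k) (r i) * dot_prod p (e l) (r i))
                   = (if k = l then d k else 0)" if kl: "k < p" "l < p" for k l
  proof -
    have "(1 / real n) * (\<Sum>i<n. dot_prod p (e k) (r i) * dot_prod p (e l) (r i))
        = (transpose_mat Q * A * Q) $$ (k, l)"
      using sample_mat_bilinear[where x = "e k" and y = "e l" and p = p and n = n and r = r]
      unfolding index_transpose_conj_mat[OF Qc A kl] by (simp add: e_def A_def)
    also have "\<dots> = (if k = l then d k else 0)"
      using diag Qc A kl unfolding diagonal_mat_def by (auto simp: d_def)
    finally show ?thesis .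
  qed
  ultimately show ?thesis unfolding A_def by blast
qed

lemma bessel_inequality:
  assumes S: "finite S" and on: "orthonormal_on p S e"
  shows "(\<Sum>k\<in>S. (dot_prod p (e k) z)^2) \<le> (\<Sum>j<p. (z j)^2)"
proof -
  define b where "b k = dot_prod p (e k) z" for k
  have "0 \<le> (\<Sum>j<p. (z j - (\<Sum>k\<in>S. b k * e k j))^2)" by (simp add: sum_nonneg)
  also have "\<dots> = (\<Sum>j<p. (z j)^2) - 2 * (\<Sum>k\<in>S. b k * (\<Sum>j<p. e k j * z j))
       + (\<Sum>j<p. (\<Sum>k\<in>S. b k * e k j)^2)"
    by (simp add: power2_diff sum.distrib sum_subtractf sum_distrib_left sum_distrib_right
        mult_ac sum.swap[of _ S])
  also have "(\<Sum>j<p. (\<Sum>k\<in>S. b k * e k j)^2) = (\<Sum>k\<in>S. \<Sum>l\<in>S. b k * b l * dot_prod p (e k) (e l))"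
    by (simp add: power2_eq_square sum_product dot_prod_def sum_distrib_left mult_ac sum.swap[of _ "{..<p}"])
  also have "\<dots> = (\<Sum>k\<in>S. \<Sum>l\<in>S. if k = l then b k * b l else 0)"
    using on by (intro sum.cong refl) (simp add: orthonormal_on_def)
  also have "\<dots> = (\<Sum>k\<in>S. (b k)^2)"
    using S by (intro sum.cong refl) (simp add: power2_eq_square)
  finally show ?thesis by (simp add: b_def dot_prod_def power2_eq_square)
qed

lemma weighted_diag_psd_plus_rank_one_le_trace:
  fixes G :: "'k \<Rightarrow> 'k \<Rightarrow> real"
  assumes S: "finite S"
    and psd: "\<And>x. 0 \<le> (\<Sum>k\<in>S. \<Sum>l\<in>S. x k * x l * G k l)"
    and diag: "\<And>k l. k \<in> S \<Longrightarrow> l \<in> S \<Longrightarrow> G k l + c k * c l = (if k = l then d k else 0)"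
    and s: "s = (\<Sum>k\<in>S. (c k)^2)" "0 < s"
  shows "(\<Sum>k\<in>S. d k * (1 - (c k)^2 / s)) \<le> (\<Sum>k\<in>S. G k k)"
proof -
  define Q where "Q = (\<Sum>k\<in>S. \<Sum>l\<in>S. c k * c l * G k l)"
  have d: "d k = G k k + (c k)^2" if "k \<in> S" for k
    using diag[OF that that] by (simp add: power2_eq_square)
  have "(\<Sum>k\<in>S. d k * (1 - (c k)^2 / s)) = (\<Sum>k\<in>S. d k) - (\<Sum>k\<in>S. d k * (c k)^2) / s"
    by (simp add: algebra_simps sum_subtractf sum_divide_distrib)
  also have "(\<Sum>k\<in>S. d k) = (\<Sum>k\<in>S. G k k) + s"
    by (simp add: d s sum.distrib)
  also have "(\<Sum>k\<in>S. d k * (c k)^2) = (\<Sum>k\<in>S. \<Sum>l\<in>S. c k * c l * (if k = l then d k else 0))"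
    using S by (intro sum.cong refl) (simp add: power2_eq_square mult_ac if_distrib cong: if_cong)
  also have "\<dots> = (\<Sum>k\<in>S. \<Sum>l\<in>S. c k * c l * (G k l + c k * c l))"
    by (intro sum.cong refl) (simp add: diag)
  also have "\<dots> = Q + s^2"
    by (simp add: Q_def distrib_left sum.distrib s power2_eq_square sum_product mult_ac)
  also have "(Q + s^2) / s = Q / s + s"
    using s by (simp add: add_divide_distrib power2_eq_square)
  finally show ?thesis
    using psd[of c] s(2) by (simp add: Q_def)
qed

lemma card_diag_psd_plus_rank_one:
  fixes G :: "'k \<Rightarrow> 'k \<Rightarrow> real"
  assumes S: "finite S"
    and psd: "\<And>x. 0 \<le> (\<Sum>k\<in>S. \<Sum>l\<in>S. x k * x l * G k l)"
    and diag: "\<And>k l. k \<in> S \<Longrightarrow> l \<in> S \<Longrightarrow> G k l + c k * c l = (if k = l then d k else 0)"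
    and big: "\<And>k. k \<in> S \<Longrightarrow> T \<le> d k" and T: "0 \<le> T"
  shows "(real (card S) - 1) * T \<le> (\<Sum>k\<in>S. G k k)"
proof -
  define s where "s = (\<Sum>k\<in>S. (c k)^2)"
  show ?thesis
  proof (cases "s = 0")
    case True
    hence "c k = 0" if "k \<in> S" for k
      using that S by (simp add: s_def sum_nonneg_eq_0_iff)
    hence "G k k = d k" if "k \<in> S" for k
      using diag[OF that that] that by simp
    hence "(\<Sum>k\<in>S. G k k) = (\<Sum>k\<in>S. d k)" by simp
    moreover have "real (card S) * T \<le> (\<Sum>k\<in>S. d k)"
      using sum_mono[of S "\<lambda>_. T" d] big by simp
    ultimately show ?thesis using T by (simp add: algebra_simps)
  next
    case False
    hence s: "0 < s" by (simp add: s_def sum_nonneg order_le_neq_trans)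
    txt \<open>The weights \<open>1 - c\<^sub>k\<^sup>2 / s \<ge> 0\<close> remove the rank-one part \<open>c c\<^sup>T\<close> and sum to \<open>card S - 1\<close>.\<close>
    have "0 \<le> 1 - (c k)^2 / s" if "k \<in> S" for k
      using member_le_sum[of k S "\<lambda>k. (c k)^2"] that S s by (simp add: s_def)
    hence "(\<Sum>k\<in>S. T * (1 - (c k)^2 / s)) \<le> (\<Sum>k\<in>S. d k * (1 - (c k)^2 / s))"
      using big by (intro sum_mono mult_right_mono) auto
    also have "\<dots> \<le> (\<Sum>k\<in>S. G k k)"
      using weighted_diag_psd_plus_rank_one_le_trace[OF S psd diag s_def s] .
    also have "(\<Sum>k\<in>S. T * (1 - (c k)^2 / s)) = (real (card S) - 1) * T"
      using s by (simp add: sum_distrib_left[symmetric] sum_subtractf sum_divide_distrib[symmetric]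
          s_def[symmetric] algebra_simps)
    finally show ?thesis .
  qed
qed

lemma sum_sq_dev_mean_le:
  fixes a :: "nat \<Rightarrow> real"
  shows "(\<Sum>i<n. (a i - (\<Sum>i'<n. a i') / real n)^2) \<le> (\<Sum>i<n. (a i - m)^2)"
proof (cases "n = 0")
  case False
  define ab where "ab = (\<Sum>i'<n. a i') / real n"
  have "(\<Sum>i<n. a i - ab) = 0" using False by (simp add: sum_subtractf ab_def)
  moreover have "(\<Sum>i<n. (a i - m)^2)
      = (\<Sum>i<n. (a i - ab)^2) + 2 * (ab - m) * (\<Sum>i<n. a i - ab) + real n * (ab - m)^2"
    by (simp add: power2_eq_square algebra_simps sum.distrib sum_distrib_left sum_subtractf)
  ultimately show ?thesis by (simp add: ab_def)
qed simp

lemma gram_quadratic_form_nonneg: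
  fixes a :: "nat \<Rightarrow> 'k \<Rightarrow> real"
  shows "0 \<le> (\<Sum>k\<in>S. \<Sum>l\<in>S. x k * x l * ((1 / real n) * (\<Sum>i<n. a i k * a i l)))"
proof -
  have "(\<Sum>i<n. (\<Sum>k\<in>S. x k * a i k)^2) = (\<Sum>i<n. \<Sum>k\<in>S. \<Sum>l\<in>S. x k * x l * (a i k * a i l))"
    by (simp add: power2_eq_square sum_product mult_ac)
  also have "\<dots> = (\<Sum>k\<in>S. \<Sum>i<n. \<Sum>l\<in>S. x k * x l * (a i k * a i l))" by (rule sum.swap)
  also have "\<dots> = (\<Sum>k\<in>S. \<Sum>l\<in>S. \<Sum>i<n. x k * x l * (a i k * a i l))"
    by (intro sum.cong refl sum.swap)
  finally have "(\<Sum>k\<in>S. \<Sum>l\<in>S. x k * x l * ((1 / real n) * (\<Sum>i<n. a i k * a i l)))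
      = (1 / real n) * (\<Sum>i<n. (\<Sum>k\<in>S. x k * a i k)^2)"
    by (simp add: sum_distrib_left mult_ac)
  thus ?thesis by (simp add: sum_nonneg)
qed

lemma card_large_second_moments:
  fixes r :: "nat \<Rightarrow> nat \<Rightarrow> real"
  assumes n: "0 < n" and S: "finite S" and on: "orthonormal_on p S e"
    and quad: "\<And>k l. k \<in> S \<Longrightarrow> l \<in> S \<Longrightarrow>
        (1 / real n) * (\<Sum>i<n. dot_prod p (e k) (r i) * dot_prod p (e l) (r i)) = (if k = l then d k else 0)"
    and big: "\<And>k. k \<in> S \<Longrightarrow> T \<le> d k" and T: "0 \<le> T"
  shows "(real (card S) - 1) * T \<le> (1 / real n) * (\<Sum>i<n. \<Sum>j<p. (r i j - m j)^2)"
proof -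
  define z where "z i j = r i j - (\<Sum>i'<n. r i' j) / real n" for i j
  define a where "a i k = dot_prod p (e k) (z i)" for i k
  define c where "c k = dot_prod p (e k) (\<lambda>j. (\<Sum>i'<n. r i' j) / real n)" for k
  define G where "G k l = (1 / real n) * (\<Sum>i<n. a i k * a i l)" for k l
  have a_sum: "(\<Sum>i<n. a i k) = 0" for k
  proof -
    have "(\<Sum>i<n. a i k) = (\<Sum>j<p. e k j * (\<Sum>i<n. z i j))"
      by (simp add: a_def dot_prod_def sum_distrib_left) (rule sum.swap)
    moreover have "(\<Sum>i<n. z i j) = 0" for j using n by (simp add: z_def sum_subtractf)
    ultimately show ?thesis by simp
  qed
  have r_split: "dot_prod p (e k) (r i) = a i k + c k" for i k
    by (simp add: a_def c_def z_def dot_prod_def algebra_simps sum.distrib[symmetric])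
  have "(\<Sum>i<n. (a i k + c k) * (a i l + c l))
      = (\<Sum>i<n. a i k * a i l) + c l * (\<Sum>i<n. a i k) + c k * (\<Sum>i<n. a i l) + real n * (c k * c l)"
    for k l by (simp add: algebra_simps sum.distrib sum_distrib_left)
  hence diag: "G k l + c k * c l = (if k = l then d k else 0)" if "k \<in> S" "l \<in> S" for k l
    using quad[OF that] n by (simp add: G_def a_sum r_split distrib_left)
  have psd: "0 \<le> (\<Sum>k\<in>S. \<Sum>l\<in>S. x k * x l * G k l)" for x
    unfolding G_def by (rule gram_quadratic_form_nonneg)
  have "(real (card S) - 1) * T \<le> (\<Sum>k\<in>S. G k k)"
    by (rule card_diag_psd_plus_rank_one[OF S psd diag big T])
  also have "(\<Sum>k\<in>S. G k k) = (1 / real n) * (\<Sum>i<n. \<Sum>k\<in>S. (a i k)^2)"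
    by (simp add: G_def sum_distrib_left power2_eq_square sum.swap[of _ S])
  also have "\<dots> \<le> (1 / real n) * (\<Sum>i<n. \<Sum>j<p. (z i j)^2)"
    unfolding a_def by (intro mult_left_mono sum_mono bessel_inequality[OF S on]) auto
  also have "\<dots> \<le> (1 / real n) * (\<Sum>i<n. \<Sum>j<p. (r i j - m j)^2)"
  proof -
    have "(\<Sum>i<n. \<Sum>j<p. (z i j)^2) = (\<Sum>j<p. \<Sum>i<n. (z i j)^2)" by (rule sum.swap)
    also have "\<dots> \<le> (\<Sum>j<p. \<Sum>i<n. (r i j - m j)^2)"
      unfolding z_def by (intro sum_mono sum_sq_dev_mean_le)
    also have "\<dots> = (\<Sum>i<n. \<Sum>j<p. (r i j - m j)^2)" by (rule sum.swap)
    finally show ?thesis by (simp add: divide_right_mono)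
  qed
  finally show ?thesis .
qed

lemma sample_mat_eigenvalues:
  obtains d where "proots (char_poly (sample_mat p n r)) = mset (map d [0..<p])"
    and "\<And>k. k < p \<Longrightarrow> 0 \<le> d k"
    and "\<And>T L m. 0 < T \<Longrightarrow> 0 \<le> L \<Longrightarrow> (\<And>i. i < n \<Longrightarrow> (\<Sum>j<p. (r i j - m j)^2) \<le> L * real p)
           \<Longrightarrow> real (card {k\<in>{..<p}. T < d k}) \<le> 1 + L * real p / T"
proof -
  obtain d e where cp: "proots (char_poly (sample_mat p n r)) = mset (map d [0..<p])"
    and on: "orthonormal_on p {..<p} e"
    and quad: "\<forall>k<p. \<forall>l<p. (1 / real n) * (\<Sum>i<n. dot_prod p (e k) (r i) * dot_prod p (e l) (r i))
                   = (if k = l then d k else 0)"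
    using sample_mat_eigen_decomposition by blast
  show ?thesis
  proof (rule that[OF cp])
    show "0 \<le> d k" if "k < p" for k
    proof -
      have "d k = (1 / real n) * (\<Sum>i<n. (dot_prod p (e k) (r i))^2)"
        using quad that by (simp add: power2_eq_square)
      thus ?thesis by (simp add: sum_nonneg)
    qed
  next
    fix T L :: real and m :: "nat \<Rightarrow> real"
    assume T: "0 < T" and L: "0 \<le> L" and bd: "\<And>i. i < n \<Longrightarrow> (\<Sum>j<p. (r i j - m j)^2) \<le> L * real p"
    define S where "S = {k\<in>{..<p}. T < d k}"
    show "real (card S) \<le> 1 + L * real p / T"
    proof (cases "n = 0")
      case True
      hence "d k = 0" if "k < p" for k using quad[rule_format, OF that that] by simp
      hence "S = {}" using T by (auto simp: S_def)
      thus ?thesis using T L by simp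
    next
      case False
      have "(real (card S) - 1) * T \<le> (1 / real n) * (\<Sum>i<n. \<Sum>j<p. (r i j - m j)^2)"
        using quad on T False
        by (intro card_large_second_moments[where e = e and d = d]) (auto simp: S_def orthonormal_on_def)
      also have "\<dots> \<le> (1 / real n) * (real n * (L * real p))"
        using bd sum_mono[of "{..<n}" "\<lambda>i. \<Sum>j<p. (r i j - m j)^2" "\<lambda>_. L * real p"]
        by (intro mult_left_mono) auto
      finally show ?thesis using T False by (simp add: field_simps)
    qed
  qed
qed

section \<open>Spectral distributions and tightness\<close>

lemma measure_spectral_distribution:
  assumes cp: "proots (char_poly A) = mset (map d [0..<p])" and p: "0 < p" and X: "X \<in> sets borel"
  shows "measure (spectral_distribution A) X = real (card {k\<in>{..<p}. d k \<in> X}) / real p"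
proof -
  have "pmf_of_multiset (mset (map d [0..<p])) = map_pmf d (pmf_of_set {..<p})"
    using p by (subst map_pmf_of_set) (auto simp: lessThan_atLeast0 mset_map)
  hence "measure (spectral_distribution A) X = measure (measure_pmf (pmf_of_set {..<p})) (d -` X)"
    unfolding spectral_distribution_def cp using X by (subst measure_distr) auto
  also have "\<dots> = real (card ({..<p} \<inter> d -` X)) / real p"
    using p by (subst measure_pmf_of_set) auto
  also have "{..<p} \<inter> d -` X = {k\<in>{..<p}. d k \<in> X}" by auto
  finally show ?thesis .
qed

lemma real_distribution_spectral_distribution: "real_distribution (spectral_distribution A)"
  unfolding spectral_distribution_def real_distribution_def real_distribution_axioms_def
  by (auto intro!: prob_space.prob_space_distr prob_space_measure_pmf)

lemma spectral_distribution_sample_mat_support: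
  assumes p: "0 < p"
  shows "\<exists>R. \<forall>b\<ge>R. measure (spectral_distribution (sample_mat p n r)) {-1<..b} = 1"
proof -
  obtain d where cp: "proots (char_poly (sample_mat p n r)) = mset (map d [0..<p])"
    and d: "\<And>k. k < p \<Longrightarrow> 0 \<le> d k"
    by (rule sample_mat_eigenvalues[of p n r]) (rule that, blast+)
  have "measure (spectral_distribution (sample_mat p n r)) {-1<..b} = 1"
    if b: "Max (d ` {..<p}) \<le> b" for b
  proof -
    have "d k \<in> {-1<..b}" if "k < p" for k
    proof -
      have "d k \<le> Max (d ` {..<p})" using that by (intro Max_ge) auto
      thus ?thesis using d[OF that] b by auto
    qed
    hence "{k\<in>{..<p}. d k \<in> {-1<..b}} = {..<p}" by auto
    thus ?thesis using p by (simp add: measure_spectral_distribution[OF cp p])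
  qed
  thus ?thesis by blast
qed

lemma spectral_distribution_sample_mat_mass:
  assumes p: "0 < p" and T: "0 < T" "T \<le> b" and L: "0 \<le> L"
    and bd: "\<And>i. i < n \<Longrightarrow> (\<Sum>j<p. (r i j - m j)^2) \<le> L * real p"
  shows "1 - 1 / real p - L / T \<le> measure (spectral_distribution (sample_mat p n r)) {-1<..b}"
proof -
  obtain d where cp: "proots (char_poly (sample_mat p n r)) = mset (map d [0..<p])"
    and d: "\<And>k. k < p \<Longrightarrow> 0 \<le> d k"
    and count: "\<And>T L m. 0 < T \<Longrightarrow> 0 \<le> L \<Longrightarrow> (\<And>i. i < n \<Longrightarrow> (\<Sum>j<p. (r i j - m j)^2) \<le> L * real p)
           \<Longrightarrow> real (card {k\<in>{..<p}. T < d k}) \<le> 1 + L * real p / T"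
    by (rule sample_mat_eigenvalues[of p n r]) (rule that, blast+)
  have "{..<p} \<subseteq> {k\<in>{..<p}. d k \<in> {-1<..b}} \<union> {k\<in>{..<p}. T < d k}"
    using d T(2) by force
  hence "card {..<p} \<le> card ({k\<in>{..<p}. d k \<in> {-1<..b}} \<union> {k\<in>{..<p}. T < d k})"
    by (intro card_mono) auto
  also have "\<dots> \<le> card {k\<in>{..<p}. d k \<in> {-1<..b}} + card {k\<in>{..<p}. T < d k}"
    by (rule card_Un_le)
  finally have "real p \<le> real (card {k\<in>{..<p}. d k \<in> {-1<..b}}) + real (card {k\<in>{..<p}. T < d k})"
    by simp
  hence "real p - (1 + L * real p / T) \<le> real (card {k\<in>{..<p}. d k \<in> {-1<..b}})"
    using count[OF T(1) L bd] by linarith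
  hence "(real p - (1 + L * real p / T)) / real p \<le> real (card {k\<in>{..<p}. d k \<in> {-1<..b}}) / real p"
    using p by (intro divide_right_mono) auto
  moreover have "(real p - (1 + L * real p / T)) / real p = 1 - 1 / real p - L / T"
    using p T by (simp add: field_simps)
  ultimately have "1 - 1 / real p - L / T \<le> real (card {k\<in>{..<p}. d k \<in> {-1<..b}}) / real p"
    by simp
  thus ?thesis by (simp add: measure_spectral_distribution[OF cp p])
qed

lemma sum_sq_le_of_edist_le:
  assumes "edist p x m \<le> a * sqrt (real p)"
  shows "(\<Sum>j<p. (x j - m j)^2) \<le> a^2 * real p"
proof -
  have "(\<Sum>j<p. (x j - m j)^2) = (edist p x m)^2"
    by (simp add: edist_def sum_nonneg)
  also have "\<dots> \<le> (a * sqrt (real p))^2"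
    using assms by (intro power_mono) (auto simp: edist_def sum_nonneg)
  finally show ?thesis by (simp add: power_mult_distrib)
qed

lemma tight_spectral_distributions:
  fixes rr :: "nat \<Rightarrow> nat \<Rightarrow> nat \<Rightarrow> real" and nn :: "nat \<Rightarrow> nat" and mu :: "nat \<Rightarrow> nat \<Rightarrow> real"
  assumes "\<forall>\<^sub>F p in sequentially. \<forall>i<nn p. edist p (rr p i) (mu p) \<le> a * sqrt (real p)"
  shows "tight (\<lambda>k. spectral_distribution (sample_mat (Suc k) (nn (Suc k)) (rr (Suc k))))"
    (is "tight ?\<mu>")
proof -
  obtain P0 where bd: "\<And>p i. P0 \<le> p \<Longrightarrow> i < nn p \<Longrightarrow> edist p (rr p i) (mu p) \<le> a * sqrt (real p)"
    using assms by (auto simp: eventually_sequentially)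
  have sq: "(\<Sum>j<p. (rr p i j - mu p j)^2) \<le> a^2 * real p" if "P0 \<le> p" "i < nn p" for p i
    using bd[OF that] by (rule sum_sq_le_of_edist_le)
  have "\<forall>k. \<exists>R. \<forall>b\<ge>R. measure (?\<mu> k) {-1<..b} = 1"
    using spectral_distribution_sample_mat_support by blast
  then obtain R where R: "\<And>k b. R k \<le> b \<Longrightarrow> measure (?\<mu> k) {-1<..b} = 1" by metis
  have "\<exists>c b. c < b \<and> (\<forall>k. 1 - \<epsilon> < measure (?\<mu> k) {c<..b})" if \<epsilon>: "0 < \<epsilon>" for \<epsilon>
  proof -
    define T where "T = 4 * (a^2 + 1) / \<epsilon>"
    have a: "0 < a^2 + 1" by (simp add: add_nonneg_pos)
    hence T: "0 < T" using \<epsilon> by (simp add: T_def)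
    have "a^2 / T = \<epsilon> / 4 * (a^2 / (a^2 + 1))" by (simp add: T_def)
    also have "\<dots> < \<epsilon> / 4" using a \<epsilon> by (simp add: field_simps)
    finally have aT: "a^2 / T < \<epsilon> / 4" .
    define K0 where "K0 = max P0 (nat \<lceil>4 / \<epsilon>\<rceil>)"
    define b where "b = max T (Max (R ` {..<K0}))"
    have "1 - \<epsilon> < measure (?\<mu> k) {-1<..b}" for k
    proof (cases "k < K0")
      case True
      hence "R k \<le> b" by (simp add: b_def le_max_iff_disj)
      thus ?thesis using R \<epsilon> by simp
    next
      case False
      have "4 / \<epsilon> \<le> real (nat \<lceil>4 / \<epsilon>\<rceil>)" by (rule real_nat_ceiling_ge)
      hence "P0 \<le> Suc k" and "4 / \<epsilon> \<le> real (Suc k)" using False by (auto simp: K0_def)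
      have "1 - 1 / real (Suc k) - a^2 / T \<le> measure (?\<mu> k) {-1<..b}"
        using sq[OF \<open>P0 \<le> Suc k\<close>] T
        by (intro spectral_distribution_sample_mat_mass) (auto simp: b_def)
      moreover have "1 / real (Suc k) \<le> \<epsilon> / 4"
        using \<open>4 / \<epsilon> \<le> real (Suc k)\<close> \<epsilon> by (simp add: field_simps)
      ultimately show ?thesis using aT \<epsilon> by linarith
    qed
    moreover have "-1 < b" using T by (simp add: b_def less_max_iff_disj)
    ultimately show ?thesis by blast
  qed
  thus ?thesis by (simp add: tight_def real_distribution_spectral_distribution)
qed

section \<open>Concentration of the row deviations\<close>

lemma edist_eq_L2_set: "edist p x y = L2_set (\<lambda>j. x j - y j) {..<p}"
  by (simp add: edist_def L2_set_def)

lemma lip1_edist: "lip1 p (\<lambda>x. edist p x m)"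
  unfolding lip1_def
proof (intro allI)
  fix x y :: "nat \<Rightarrow> real"
  have "edist p x m \<le> edist p y m + edist p x y"
    using L2_set_triangle_ineq[of "\<lambda>j. y j - m j" "\<lambda>j. x j - y j" "{..<p}"]
    by (simp add: edist_eq_L2_set)
  moreover have "edist p y m \<le> edist p x m + edist p x y"
    using L2_set_triangle_ineq[of "\<lambda>j. x j - m j" "\<lambda>j. y j - x j" "{..<p}"]
    by (simp add: edist_eq_L2_set edist_def L2_set_def power2_commute)
  ultimately show "\<bar>edist p x m - edist p y m\<bar> \<le> edist p x y" by linarith
qed

lemma convex_fun_edist: "convex_fun (\<lambda>x. edist p x m)"
  unfolding convex_fun_def
proof (intro allI impI)
  fix x y :: "nat \<Rightarrow> real" and t :: real
  assume t: "0 \<le> t \<and> t \<le> 1"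
  have "edist p (\<lambda>j. t * x j + (1 - t) * y j) m
      = L2_set (\<lambda>j. t * (x j - m j) + (1 - t) * (y j - m j)) {..<p}"
    by (simp add: edist_eq_L2_set algebra_simps)
  also have "\<dots> \<le> L2_set (\<lambda>j. t * (x j - m j)) {..<p} + L2_set (\<lambda>j. (1 - t) * (y j - m j)) {..<p}"
    by (rule L2_set_triangle_ineq)
  also have "\<dots> = t * edist p x m + (1 - t) * edist p y m"
    using t by (simp add: edist_eq_L2_set L2_set_right_distrib)
  finally show "edist p (\<lambda>j. t * x j + (1 - t) * y j) m \<le> t * edist p x m + (1 - t) * edist p y m" .
qed

lemma borel_measurable_edist [measurable]:
  assumes "\<And>j. j < p \<Longrightarrow> (\<lambda>\<omega>. X \<omega> j) \<in> borel_measurable M"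
  shows "(\<lambda>\<omega>. edist p (X \<omega>) m) \<in> borel_measurable M"
  unfolding edist_def using assms by measurable

lemma (in prob_space) edist_second_moment:
  assumes meas: "\<And>j. j < p \<Longrightarrow> (\<lambda>\<omega>. X \<omega> j) \<in> borel_measurable M"
    and sq_int: "\<And>j. j < p \<Longrightarrow> integrable M (\<lambda>\<omega>. (X \<omega> j)^2)"
  shows "integrable M (\<lambda>\<omega>. (edist p (X \<omega>) m)^2)"
    and "integral\<^sup>L M (\<lambda>\<omega>. (edist p (X \<omega>) m)^2) = (\<Sum>j<p. integral\<^sup>L M (\<lambda>\<omega>. (X \<omega> j - m j)^2))"
proof -
  have int: "integrable M (\<lambda>\<omega>. (X \<omega> j - m j)^2)" if "j < p" for j
  proof -
    have "integrable M (\<lambda>\<omega>. X \<omega> j)"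
      by (rule square_integrable_imp_integrable) (use meas sq_int that in auto)
    moreover have "(\<lambda>\<omega>. (X \<omega> j - m j)^2) = (\<lambda>\<omega>. (X \<omega> j)^2 - 2 * m j * X \<omega> j + (m j)^2)"
      by (simp add: power2_diff algebra_simps)
    ultimately show ?thesis using sq_int[OF that] by simp
  qed
  have sq: "(edist p (X \<omega>) m)^2 = (\<Sum>j<p. (X \<omega> j - m j)^2)" for \<omega>
    by (simp add: edist_def sum_nonneg)
  show "integrable M (\<lambda>\<omega>. (edist p (X \<omega>) m)^2)" unfolding sq using int by auto
  show "integral\<^sup>L M (\<lambda>\<omega>. (edist p (X \<omega>) m)^2) = (\<Sum>j<p. integral\<^sup>L M (\<lambda>\<omega>. (X \<omega> j - m j)^2))"
    unfolding sq using int by (intro Bochner_Integration.integral_sum) auto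
qed

lemma (in prob_space) median_le_sqrt_two_second_moment:
  assumes med: "is_median M Y m" and Y: "Y \<in> borel_measurable M"
    and int: "integrable M (\<lambda>\<omega>. (Y \<omega>)^2)" and V: "integral\<^sup>L M (\<lambda>\<omega>. (Y \<omega>)^2) \<le> V"
  shows "m \<le> sqrt (2 * V)"
proof (cases "m \<le> 0")
  case True
  have "0 \<le> integral\<^sup>L M (\<lambda>\<omega>. (Y \<omega>)^2)" by (rule integral_nonneg_AE) simp
  hence "0 \<le> V" using V by linarith
  thus ?thesis using True real_sqrt_ge_zero[of "2 * V"] by linarith
next
  case False
  have "1/2 \<le> prob {\<omega>\<in>space M. m \<le> Y \<omega>}" using med by (simp add: is_median_def)
  also have "\<dots> \<le> prob {\<omega>\<in>space M. m^2 \<le> (Y \<omega>)^2}"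
  proof (rule finite_measure_mono)
    show "{\<omega>\<in>space M. m \<le> Y \<omega>} \<subseteq> {\<omega>\<in>space M. m^2 \<le> (Y \<omega>)^2}"
      using False by (auto intro: power_mono)
  qed (use Y in measurable)
  also have "\<dots> \<le> integral\<^sup>L M (\<lambda>\<omega>. (Y \<omega>)^2) / m^2"
    using False by (intro integral_Markov_inequality_measure[OF int]) auto
  also have "\<dots> \<le> V / m^2" using V by (simp add: divide_right_mono)
  finally have "m^2 \<le> 2 * V" using False by (simp add: field_simps)
  thus ?thesis by (rule real_le_rsqrt)
qed

lemma is_median_cong:
  assumes "\<And>\<omega>. \<omega> \<in> space M \<Longrightarrow> f \<omega> = g \<omega>"
  shows "is_median M f m = is_median M g m"
proof -
  have "{\<omega>\<in>space M. m \<le> f \<omega>} = {\<omega>\<in>space M. m \<le> g \<omega>}" "{\<omega>\<in>space M. f \<omega> \<le> m} = {\<omega>\<in>space M. g \<omega> \<le> m}"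
    using assms by auto
  thus ?thesis by (simp add: is_median_def)
qed

lemma mult_powr_le_of_rate:
  fixes x :: real
  assumes x: "1 \<le> x" and g: "\<gamma> \<le> e - \<alpha>" and c1: "0 \<le> c1" and c: "c1 * x powr (- \<alpha>) \<le> c"
  shows "c1 * x powr \<gamma> \<le> c * x powr e"
proof -
  have "c1 * x powr \<gamma> \<le> c1 * x powr (e - \<alpha>)" using x g c1 by (intro mult_left_mono powr_mono) auto
  also have "\<dots> = (c1 * x powr (- \<alpha>)) * x powr e" by (simp add: powr_add[symmetric])
  also have "\<dots> \<le> c * x powr e" using c by (intro mult_right_mono) auto
  finally show ?thesis .
qed

lemma concentr_subclass:
  assumes "concentr M Fs X C c b" and "\<And>F. Fs' F \<Longrightarrow> Fs F"
  shows "concentr M Fs' X C c b"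
  using assms unfolding concentr_def by blast

lemma hypC_imp_concentr_lip1:
  assumes "hypC M p X C c"
  shows "concentr M (lip1 p) X C c 2"
  unfolding concentr_def
proof (intro allI impI)
  fix F assume F: "lip1 p F"
  obtain d u \<Phi> where \<Phi>: "\<forall>x y. edist p (\<Phi> x) (\<Phi> y) \<le> edist d x y"
    and X: "\<forall>\<omega>\<in>space M. \<forall>j<p. X \<omega> j = \<Phi> (u \<omega>) j" and u: "concentr M (lip1 d) u C c 2"
    using assms unfolding hypC_def by blast
  have "lip1 d (F \<circ> \<Phi>)"
    using F \<Phi> unfolding lip1_def by (metis comp_apply order_trans)
  then obtain med where med: "is_median M (\<lambda>\<omega>. F (\<Phi> (u \<omega>))) med"
    and tail: "\<forall>t>0. measure M {\<omega>\<in>space M. \<bar>F (\<Phi> (u \<omega>)) - med\<bar> > t} \<le> C * exp (- c * t powr 2)"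
    using u unfolding concentr_def by auto
  txt \<open>\<open>F\<close> only sees the first \<open>p\<close> coordinates, where \<open>X\<close> and \<open>\<Phi> \<circ> u\<close> agree.\<close>
  have eq: "F (X \<omega>) = F (\<Phi> (u \<omega>))" if "\<omega> \<in> space M" for \<omega>
  proof -
    have "edist p (X \<omega>) (\<Phi> (u \<omega>)) = 0"
      unfolding edist_def by (subst sum.neutral) (use X that in auto)
    thus ?thesis using F unfolding lip1_def by (metis abs_le_zero_iff right_minus_eq)
  qed
  have "is_median M (\<lambda>\<omega>. F (X \<omega>)) med"
    using med is_median_cong[of M, OF eq] by simp
  moreover have "{\<omega>\<in>space M. \<bar>F (X \<omega>) - med\<bar> > t} = {\<omega>\<in>space M. \<bar>F (\<Phi> (u \<omega>)) - med\<bar> > t}" for t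
    using eq by auto
  ultimately show "\<exists>m. is_median M (\<lambda>\<omega>. F (X \<omega>)) m \<and>
      (\<forall>t>0. measure M {\<omega>\<in>space M. \<bar>F (X \<omega>) - m\<bar> > t} \<le> C * exp (- c * t powr 2))"
    using tail by auto
qed

lemma concentr_with_rate:
  assumes p: "1 \<le> real p"
    and H: "hypA M p X C ca \<or> hypB M p X C cb b \<or> hypC M p X C cc"
    and rates: "c1 * real p powr (- \<alpha>a) \<le> ca" "c1 * real p powr (- \<alpha>b) \<le> cb"
      "c1 * real p powr (- \<alpha>c) \<le> cc"
    and \<gamma>: "\<gamma> \<le> 1 - \<alpha>a" "\<gamma> \<le> b / 2 - \<alpha>b" "\<gamma> \<le> 1 - \<alpha>c" and c1: "0 \<le> c1"
  obtains c \<beta> where "concentr M (\<lambda>F. convex_fun F \<and> lip1 p F) X C c \<beta>"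
    and "c1 * real p powr \<gamma> \<le> c * sqrt (real p) powr \<beta>"
proof -
  have sq2: "sqrt (real p) powr 2 = real p powr 1" using p by simp
  have sqb: "sqrt (real p) powr b = real p powr (b / 2)"
    using p by (simp add: powr_half_sqrt[symmetric] powr_powr)
  from H consider "hypA M p X C ca" | "hypB M p X C cb b" | "hypC M p X C cc" by blast
  then show ?thesis
  proof cases
    case 1
    moreover have "c1 * real p powr \<gamma> \<le> ca * real p powr 1"
      by (rule mult_powr_le_of_rate) (use p \<gamma> c1 rates in auto)
    ultimately show ?thesis using sq2 by (intro that[of ca 2]) (auto simp: hypA_def)
  next
    case 2
    moreover have "c1 * real p powr \<gamma> \<le> cb * real p powr (b / 2)"
      by (rule mult_powr_le_of_rate) (use p \<gamma> c1 rates in auto)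
    ultimately show ?thesis using sqb by (intro that[of cb b]) (auto simp: hypB_def)
  next
    case 3
    hence "concentr M (\<lambda>F. convex_fun F \<and> lip1 p F) X C cc 2"
      by (rule concentr_subclass[OF hypC_imp_concentr_lip1]) simp
    moreover have "c1 * real p powr \<gamma> \<le> cc * real p powr 1"
      by (rule mult_powr_le_of_rate) (use p \<gamma> c1 rates in auto)
    ultimately show ?thesis using sq2 by (intro that[of cc 2]) auto
  qed
qed

lemma (in prob_space) row_deviation_tail:
  fixes X :: "'a \<Rightarrow> nat \<Rightarrow> real"
  assumes p: "1 \<le> real p"
    and meas: "\<And>j. j < p \<Longrightarrow> (\<lambda>\<omega>. X \<omega> j) \<in> borel_measurable M"
    and sq_int: "\<And>j. j < p \<Longrightarrow> integrable M (\<lambda>\<omega>. (X \<omega> j)^2)"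
    and var: "(\<Sum>j<p. integral\<^sup>L M (\<lambda>\<omega>. (X \<omega> j - m j)^2)) / real p \<le> K"
    and C: "0 \<le> C"
    and H: "hypA M p X C ca \<or> hypB M p X C cb b \<or> hypC M p X C cc"
    and rates: "c1 * real p powr (- \<alpha>a) \<le> ca" "c1 * real p powr (- \<alpha>b) \<le> cb"
      "c1 * real p powr (- \<alpha>c) \<le> cc"
    and \<gamma>: "\<gamma> \<le> 1 - \<alpha>a" "\<gamma> \<le> b / 2 - \<alpha>b" "\<gamma> \<le> 1 - \<alpha>c" and c1: "0 \<le> c1"
  shows "prob {\<omega>\<in>space M. (sqrt (2 * max K 0) + 1) * sqrt (real p) < edist p (X \<omega>) m}
           \<le> C * exp (- c1 * real p powr \<gamma>)"
proof -
  obtain c \<beta> where conc: "concentr M (\<lambda>F. convex_fun F \<and> lip1 p F) X C c \<beta>"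
    and rate: "c1 * real p powr \<gamma> \<le> c * sqrt (real p) powr \<beta>"
    by (rule concentr_with_rate[OF p H rates \<gamma> c1])
  obtain med where med: "is_median M (\<lambda>\<omega>. edist p (X \<omega>) m) med"
    and tail: "\<forall>t>0. prob {\<omega>\<in>space M. \<bar>edist p (X \<omega>) m - med\<bar> > t} \<le> C * exp (- c * t powr \<beta>)"
    using conc convex_fun_edist lip1_edist unfolding concentr_def by blast
  have "(\<Sum>j<p. integral\<^sup>L M (\<lambda>\<omega>. (X \<omega> j - m j)^2)) \<le> K * real p"
    using var p by (simp add: pos_divide_le_eq)
  also have "\<dots> \<le> max K 0 * real p" by (simp add: mult_right_mono)
  finally have "med \<le> sqrt (2 * (max K 0 * real p))"
    using edist_second_moment[where p=p and X=X and m=m, OF meas sq_int]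
    by (intro median_le_sqrt_two_second_moment[OF med] borel_measurable_edist meas) auto
  hence "med + sqrt (real p) \<le> (sqrt (2 * max K 0) + 1) * sqrt (real p)"
    by (simp add: real_sqrt_mult distrib_right mult.assoc)
  hence "prob {\<omega>\<in>space M. (sqrt (2 * max K 0) + 1) * sqrt (real p) < edist p (X \<omega>) m}
      \<le> prob {\<omega>\<in>space M. \<bar>edist p (X \<omega>) m - med\<bar> > sqrt (real p)}"
    using borel_measurable_edist[where m=m, OF meas] by (intro finite_measure_mono) auto
  also have "\<dots> \<le> C * exp (- c * sqrt (real p) powr \<beta>)" using tail p by auto
  also have "\<dots> \<le> C * exp (- c1 * real p powr \<gamma>)" using rate C by (intro mult_left_mono) auto
  finally show ?thesis .
qed

lemma summable_real_mult_exp_neg_powr: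
  fixes c \<gamma> :: real
  assumes "0 < c" "0 < \<gamma>"
  shows "summable (\<lambda>p. real p * exp (- c * real p powr \<gamma>))"
proof (rule summable_comparison_test_bigo)
  show "(\<lambda>p. real p * exp (- c * real p powr \<gamma>)) \<in> O(\<lambda>p. inverse (real p ^ 2))"
    using assms by real_asymp
  show "summable (\<lambda>p. norm (inverse (real p ^ 2)))"
    using inverse_power_summable[of 2] by simp
qed

lemma (in prob_space) AE_eventually_rows_bounded:
  fixes Y :: "nat \<Rightarrow> nat \<Rightarrow> 'a \<Rightarrow> real" and thr :: "nat \<Rightarrow> real"
  assumes meas: "\<And>p i. P \<le> p \<Longrightarrow> i < n p \<Longrightarrow> Y p i \<in> borel_measurable M"
    and n: "\<And>p. real (n p) \<le> B * real p"
    and tail: "\<And>p i. P \<le> p \<Longrightarrow> i < n p \<Longrightarrow>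
        prob {\<omega>\<in>space M. thr p < Y p i \<omega>} \<le> C * exp (- c * real p powr \<gamma>)"
    and C: "0 \<le> C" and c: "0 < c" and \<gamma>: "0 < \<gamma>"
  shows "AE \<omega> in M. \<forall>\<^sub>F p in sequentially. \<forall>i<n p. Y p i \<omega> \<le> thr p"
proof -
  define A where "A p = (if P \<le> p then (\<Union>i<n p. {\<omega>\<in>space M. thr p < Y p i \<omega>}) else {})" for p
  have A: "A p \<in> sets M" for p
    using meas unfolding A_def by auto
  have "prob (A p) \<le> max B 0 * C * (real p * exp (- c * real p powr \<gamma>))" for p
  proof (cases "P \<le> p")
    case True
    have "prob (A p) \<le> (\<Sum>i<n p. prob {\<omega>\<in>space M. thr p < Y p i \<omega>})"
      unfolding A_def using True meas by (simp, intro finite_measure_subadditive_finite) auto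
    also have "\<dots> \<le> real (n p) * (C * exp (- c * real p powr \<gamma>))"
      using sum_mono[of "{..<n p}", OF tail[OF True]] by simp
    also have "\<dots> \<le> (max B 0 * real p) * (C * exp (- c * real p powr \<gamma>))"
      using n[of p] C by (intro mult_right_mono) (auto intro: order_trans[OF _ mult_right_mono])
    finally show ?thesis by (simp add: mult_ac)
  qed (use C in \<open>simp add: A_def\<close>)
  hence "summable (\<lambda>p. prob (A p))"
    by (intro summable_comparison_test'[OF summable_mult[OF summable_real_mult_exp_neg_powr[OF c \<gamma>]]])
      auto
  hence "AE \<omega> in M. \<forall>\<^sub>F p in sequentially. \<omega> \<in> space M - A p"
    using A by (intro borel_cantelli_AE1) (auto simp: emeasure_eq_measure)
  thus ?thesis
  proof (rule eventually_mono)
    fix \<omega> assume "\<forall>\<^sub>F p in sequentially. \<omega> \<in> space M - A p"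
    moreover have "\<forall>\<^sub>F p in sequentially. P \<le> p" by (rule eventually_ge_at_top)
    ultimately show "\<forall>\<^sub>F p in sequentially. \<forall>i<n p. Y p i \<omega> \<le> thr p"
      by eventually_elim (auto simp: A_def not_less)
  qed
qed

theorem corollary5:
  fixes M :: "'a measure"
    and n :: "nat \<Rightarrow> nat"
    and r :: "nat \<Rightarrow> nat \<Rightarrow> 'a \<Rightarrow> nat \<Rightarrow> real"
    and \<mu> :: "nat \<Rightarrow> nat \<Rightarrow> real"
    and \<Sigma> :: "nat \<Rightarrow> nat \<Rightarrow> nat \<Rightarrow> real"
    and p0 :: nat and B K :: real
  assumes P: "prob_space M"
    and n_bounded: "\<forall>p. real (n p) \<le> B * real p"
    and meas: "\<forall>p\<ge>p0. \<forall>i<n p. \<forall>j<p. (\<lambda>\<omega>. r p i \<omega> j) \<in> borel_measurable M"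
    and indep: "\<forall>p\<ge>p0. prob_space.indep_vars M (\<lambda>_. PiM {..<p} (\<lambda>_. borel))
                   (\<lambda>i \<omega>. restrict (r p i \<omega>) {..<p}) {..<n p}"
    and sq_int: "\<forall>p\<ge>p0. \<forall>i<n p. \<forall>j<p. integrable M (\<lambda>\<omega>. (r p i \<omega> j)^2)"
    and mean: "\<forall>p\<ge>p0. \<forall>i<n p. \<forall>j<p. integral\<^sup>L M (\<lambda>\<omega>. r p i \<omega> j) = \<mu> p j"
    and cov: "\<forall>p\<ge>p0. \<forall>i<n p. \<forall>j<p. \<forall>k<p.
               integral\<^sup>L M (\<lambda>\<omega>. (r p i \<omega> j - \<mu> p j) * (r p i \<omega> k - \<mu> p k)) = \<Sigma> p j k"
    and norm_bd: "\<forall>p\<ge>p0. op_norm2 p (\<Sigma> p) \<le> ln (real p)"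
    and trace_bd: "\<forall>p\<ge>p0. (\<Sum>j<p. \<Sigma> p j j) / real p \<le> K"
    and conc: "\<exists>C b \<alpha>a \<alpha>b \<alpha>c ca cb cc c1 c2.
        C > 0 \<and> b > 0 \<and> c1 > 0 \<and> c2 > 0 \<and>
        0 \<le> \<alpha>a \<and> \<alpha>a < 1 \<and> 0 \<le> \<alpha>b \<and> \<alpha>b < b / 2 \<and> 0 \<le> \<alpha>c \<and> \<alpha>c < 1 \<and>
        (\<forall>p\<ge>p0. c1 * real p powr (-\<alpha>a) \<le> ca p \<and> ca p \<le> c2 * real p powr (-\<alpha>a)) \<and>
        (\<forall>p\<ge>p0. c1 * real p powr (-\<alpha>b) \<le> cb p \<and> cb p \<le> c2 * real p powr (-\<alpha>b)) \<and>
        (\<forall>p\<ge>p0. c1 * real p powr (-\<alpha>c) \<le> cc p \<and> cc p \<le> c2 * real p powr (-\<alpha>c)) \<and>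
        (\<forall>p\<ge>p0. \<forall>i<n p. hypA M p (r p i) C (ca p) \<or> hypB M p (r p i) C (cb p) b
                            \<or> hypC M p (r p i) C (cc p))"
  shows "AE \<omega> in M. tight (\<lambda>k. spectral_distribution
            (sample_mat (Suc k) (n (Suc k)) (\<lambda>i. r (Suc k) i \<omega>)))"
proof -
  interpret prob_space M by (rule P)
  obtain C b \<alpha>a \<alpha>b \<alpha>c ca cb cc c1 where C: "0 < C" and c1: "0 < c1"
    and \<alpha>: "\<alpha>a < 1" "\<alpha>b < b / 2" "\<alpha>c < 1"
    and rates: "\<forall>p\<ge>p0. c1 * real p powr (- \<alpha>a) \<le> ca p \<and> c1 * real p powr (- \<alpha>b) \<le> cb p
                         \<and> c1 * real p powr (- \<alpha>c) \<le> cc p"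
    and hyp: "\<forall>p\<ge>p0. \<forall>i<n p. hypA M p (r p i) C (ca p) \<or> hypB M p (r p i) C (cb p) b
                            \<or> hypC M p (r p i) C (cc p)"
    using conc by (elim exE conjE) (rule that; auto)
  define \<gamma> where "\<gamma> = min (1 - \<alpha>a) (min (b / 2 - \<alpha>b) (1 - \<alpha>c))"
  define a where "a = sqrt (2 * max K 0) + 1"
  have "prob {\<omega>\<in>space M. a * sqrt (real p) < edist p (r p i \<omega>) (\<mu> p)} \<le> C * exp (- c1 * real p powr \<gamma>)"
    if p: "max p0 1 \<le> p" and i: "i < n p" for p i
  proof -
    have "(\<Sum>j<p. integral\<^sup>L M (\<lambda>\<omega>. (r p i \<omega> j - \<mu> p j)^2)) / real p \<le> K"
      using cov trace_bd p i by (simp add: power2_eq_square)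
    thus ?thesis unfolding a_def using p i meas sq_int rates hyp C c1
      by (intro row_deviation_tail[where ca = "ca p" and cb = "cb p" and cc = "cc p"]) (auto simp: \<gamma>_def)
  qed
  hence "AE \<omega> in M. \<forall>\<^sub>F p in sequentially. \<forall>i<n p. edist p (r p i \<omega>) (\<mu> p) \<le> a * sqrt (real p)"
    using meas n_bounded C c1 \<alpha>
    by (intro AE_eventually_rows_bounded[where P = "max p0 1" and B = B and C = C and c = c1 and \<gamma> = \<gamma>])
      (auto simp: \<gamma>_def intro!: borel_measurable_edist)
  thus ?thesis
  proof (rule eventually_mono)
    fix \<omega> assume "\<forall>\<^sub>F p in sequentially. \<forall>i<n p. edist p (r p i \<omega>) (\<mu> p) \<le> a * sqrt (real p)"
    thus "tight (\<lambda>k. spectral_distribution (sample_mat (Suc k) (n (Suc k)) (\<lambda>i. r (Suc k) i \<omega>)))"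
      by (rule tight_spectral_distributions[where rr = "\<lambda>p i. r p i \<omega>"])
  qed
qed

end
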